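(* For any boolean function $f:\{0,1\}^n\to\{0,1\}$ that depends on all $n$ input bits, $Q_E^{na}(f)\ge\lceil n/2\rceil$.
   Context: A function $f$ depends on bit $i$ if there is an $x$ with $f(x)\ne f(x+e_i)$, where $e_i$ is the bit string with 1 in position $i$ and 0 elsewhere, and addition is bitwise mod 2. Nonadaptive exact quantum query model: let $\mathcal H_{\rm in}$ have orthonormal basis $|0\rangle,\dots,|n\rangle$ and let the oracle $O_x$ act by $|i\rangle\mapsto(-1)^{x_i}|i\rangle$ with convention $x_0=0$. A nonadaptive quantum algorithm making $k$ queries consists of an input-independent state $|\psi\rangle\in\mathcal H_{\rm in}^{\otimes k}\otimes\mathcal H_{\rm work}$ (with $\mathcal H_{\rm work}$ a finite-dimensional workspace), to which $O_x^{\otimes k}\otimes I$ is applied, followed by an input-independent two-outcome measurement with outcomes labelled $0,1$. It computes $f$ exactly if for every $x$ the outcome is $f(x)$ with probability $1$. $Q_E^{na}(f)$ is the minimum such $k$. *)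

theory Defs
  imports Complex_Main "HOL-Library.Extended_Nat"
begin

text \<open>Bit strings of length n are lists x :: bool list with length x = n;
  bit i of the paper (1 \<le> i \<le> n) is x ! (i - 1).\<close>

definition depends_on :: "nat \<Rightarrow> (bool list \<Rightarrow> bool) \<Rightarrow> nat \<Rightarrow> bool" where
  "depends_on n f i = (\<exists>x. length x = n \<and> f x \<noteq> f (x[i := \<not> x ! i]))"

text \<open>Basis of H_in^{\<otimes>k} \<otimes> H_work: query tuples (i_1,...,i_k) with
  0 \<le> i_j \<le> n, and workspace index w < d.\<close>
definition query_basis :: "nat \<Rightarrow> nat \<Rightarrow> nat \<Rightarrow> (nat list \<times> nat) set" where
  "query_basis n k d = {(qs, w). length qs = k \<and> (\<forall>q\<in>set qs. q \<le> n) \<and> w < d}"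

definition oracle_bit :: "bool list \<Rightarrow> nat \<Rightarrow> bool" where
  "oracle_bit x i = (if i = 0 then False else x ! (i - 1))"

text \<open>Eigenvalue of O_x^{\<otimes>k} on the basis vector |i_1 ... i_k>.\<close>
definition oracle_phase :: "bool list \<Rightarrow> nat list \<Rightarrow> complex" where
  "oracle_phase x qs = prod_list (map (\<lambda>q. if oracle_bit x q then -1 else 1) qs)"

definition sqnorm :: "(nat list \<times> nat) set \<Rightarrow> (nat list \<times> nat \<Rightarrow> complex) \<Rightarrow> real" where
  "sqnorm B v = (\<Sum>b\<in>B. (cmod (v b))^2)"

definition qform :: "(nat list \<times> nat) set \<Rightarrow> (nat list \<times> nat \<Rightarrow> nat list \<times> nat \<Rightarrow> complex)
    \<Rightarrow> (nat list \<times> nat \<Rightarrow> complex) \<Rightarrow> complex" where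
  "qform B M v = (\<Sum>b\<in>B. \<Sum>b'\<in>B. cnj (v b) * M b b' * v b')"

text \<open>A two-outcome measurement {E_0, E_1} (POVM) with E_1 = M, E_0 = I - M:
  both positive semidefinite, i.e. 0 \<le> <v,Mv> \<le> <v,v> for all v.\<close>
definition two_outcome_measurement ::
    "(nat list \<times> nat) set \<Rightarrow> (nat list \<times> nat \<Rightarrow> nat list \<times> nat \<Rightarrow> complex) \<Rightarrow> bool" where
  "two_outcome_measurement B M =
     (\<forall>v. Im (qform B M v) = 0 \<and> 0 \<le> Re (qform B M v) \<and> Re (qform B M v) \<le> sqnorm B v)"

text \<open>A nonadaptive k-query algorithm computing f exactly: for every input x the
  probability <phi_x, E_1 phi_x> of outcome 1 equals f(x) (so outcome f(x) has
  probability 1), where phi_x = (O_x^{\<otimes>k} \<otimes> I) psi.\<close>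
definition na_exact_algorithm :: "nat \<Rightarrow> (bool list \<Rightarrow> bool) \<Rightarrow> nat \<Rightarrow> bool" where
  "na_exact_algorithm n f k =
     (\<exists>d \<psi> M. 0 < d \<and> sqnorm (query_basis n k d) \<psi> = 1
        \<and> two_outcome_measurement (query_basis n k d) M
        \<and> (\<forall>x. length x = n \<longrightarrow>
              qform (query_basis n k d) M (\<lambda>b. oracle_phase x (fst b) * \<psi> b)
                = (if f x then 1 else 0)))"

definition Q_E_na :: "nat \<Rightarrow> (bool list \<Rightarrow> bool) \<Rightarrow> enat" where
  "Q_E_na n f = (INF k \<in> {k. na_exact_algorithm n f k}. enat k)"

end

theory Submission
  imports Defs
begin

(* Let psi be the initial state of an exact nonadaptive k-query algorithm and
   phi_x the state after the oracle calls on input x.  If f(x) /= f(x'), the measurement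
   accepts one of phi_x, phi_x' with certainty and rejects the other with certainty, so
   the two states are orthogonal (a measurement with 0 <= E_1 <= I cannot distinguish
   non-orthogonal states perfectly).  When x' is x with bit i flipped, the overlap of
   phi_x and phi_x' is sum_b (+-1) |psi_b|^2, the sign being -1 exactly on the basis
   states whose query tuple contains i an odd number of times.  Hence for every bit i
   these basis states carry weight exactly 1/2.  Summing over the n bits, and using that
   a tuple of k queries has odd multiplicity on at most k bits, gives n/2 <= k. *)

definition braket :: "(nat list \<times> nat) set \<Rightarrow> (nat list \<times> nat \<Rightarrow> complex)
    \<Rightarrow> (nat list \<times> nat \<Rightarrow> complex) \<Rightarrow> complex" where
  "braket B u v = (\<Sum>b\<in>B. cnj (u b) * v b)"

definition sesq :: "(nat list \<times> nat) set \<Rightarrow> (nat list \<times> nat \<Rightarrow> nat list \<times> nat \<Rightarrow> complex)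
    \<Rightarrow> (nat list \<times> nat \<Rightarrow> complex) \<Rightarrow> (nat list \<times> nat \<Rightarrow> complex) \<Rightarrow> complex" where
  "sesq B M u v = (\<Sum>b\<in>B. \<Sum>b'\<in>B. cnj (u b) * M b b' * v b')"

lemma sqnorm_braket: "complex_of_real (sqnorm B u) = braket B u u"
  unfolding sqnorm_def braket_def of_real_sum complex_norm_square by (simp add: mult.commute)

lemma braket_swap: "braket B v u = cnj (braket B u v)"
  unfolding braket_def by (simp add: mult.commute)

lemma qform_add_scaled:
  "qform B M (\<lambda>b. u b + t * v b)
     = qform B M u + t * sesq B M u v + cnj t * sesq B M v u + cnj t * t * qform B M v"
  by (simp add: qform_def sesq_def sum.distrib sum_distrib_left algebra_simps)

lemma sqnorm_add_scaled:
  "sqnorm B (\<lambda>b. u b + t * v b)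
     = sqnorm B u + 2 * Re (t * braket B u v) + (cmod t)^2 * sqnorm B v"
proof -
  have "complex_of_real (sqnorm B (\<lambda>b. u b + t * v b))
      = braket B u u + t * braket B u v + cnj t * braket B v u + cnj t * t * braket B v v"
    unfolding sqnorm_braket by (simp add: braket_def sum.distrib sum_distrib_left algebra_simps)
  also have "\<dots> = complex_of_real (sqnorm B u + 2 * Re (t * braket B u v) + (cmod t)^2 * sqnorm B v)"
  proof -
    have cross: "t * braket B u v + cnj t * braket B v u = complex_of_real (2 * Re (t * braket B u v))"
      using complex_add_cnj[of "t * braket B u v"] by (simp add: braket_swap[of B v u])
    have quad: "cnj t * t * braket B v v = complex_of_real ((cmod t)^2 * sqnorm B v)"
      by (simp only: of_real_mult complex_norm_square sqnorm_braket) (simp add: ac_simps)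
    show ?thesis
      by (simp only: of_real_add sqnorm_braket cross[symmetric] quad[symmetric] add.assoc)
  qed
  finally show ?thesis by (simp only: of_real_eq_iff)
qed

lemma nonneg_affine_slope_zero:
  fixes a :: real
  assumes "\<And>s. 0 \<le> 1 + s * a"
  shows "a = 0"
proof (rule ccontr)
  assume "a \<noteq> 0"
  with assms[of "-2 / a"] show False by simp
qed

text \<open>On the complex line u + t v the acceptance
  probability stays equal to 1, which bounds the squared norm from below by 1; for
  t = -cnj <u,v> this forces <u,v> = 0.\<close>

lemma certain_outcomes_orthogonal:
  assumes M: "two_outcome_measurement B M"
    and accept: "qform B M u = 1" and reject: "qform B M v = 0"
    and unit_u: "sqnorm B u = 1" and unit_v: "sqnorm B v = 1"
  shows "braket B u v = 0"
proof -
  define line where "line t = (\<lambda>b. u b + t * v b)" for t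
  have accept_line: "Re (qform B M (line t)) = 1" for t
  proof -
    define c where "c = Re (t * sesq B M u v + cnj t * sesq B M v u)"
    have scaled: "Re (qform B M (line (of_real s * t))) = 1 + s * c" for s
      using qform_add_scaled[of B M u "of_real s * t" v] accept reject
      by (simp add: line_def c_def algebra_simps)
    have "c = 0"
    proof (rule nonneg_affine_slope_zero)
      show "0 \<le> 1 + s * c" for s
        using M scaled[of s] unfolding two_outcome_measurement_def by metis
    qed
    thus ?thesis using scaled[of 1] by simp
  qed
  define G where "G = braket B u v"
  have "1 \<le> sqnorm B (line (- cnj G))"
    using M accept_line unfolding two_outcome_measurement_def by metis
  also have "\<dots> = 1 - (cmod G)^2"
    using sqnorm_add_scaled[of B u "- cnj G" v] unit_u unit_v
    by (simp add: line_def G_def complex_norm_square[symmetric] mult.commute)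
  finally show ?thesis unfolding G_def by simp
qed

definition phased :: "bool list \<Rightarrow> (nat list \<times> nat \<Rightarrow> complex) \<Rightarrow> nat list \<times> nat \<Rightarrow> complex" where
  "phased x \<psi> = (\<lambda>b. oracle_phase x (fst b) * \<psi> b)"

text \<open>Flipping bit i (0-based, i.e. oracle index Suc i) changes the phase of the query
  tuple qs iff qs queries that index an odd number of times.\<close>

definition flips_sign :: "nat \<Rightarrow> nat list \<Rightarrow> bool" where
  "flips_sign i qs \<longleftrightarrow> odd (count_list qs (Suc i))"

lemma oracle_phase_Cons:
  "oracle_phase x (q # qs) = (if oracle_bit x q then -1 else 1) * oracle_phase x qs"
  by (simp add: oracle_phase_def)

lemma oracle_phase_real: "cnj (oracle_phase x qs) = oracle_phase x qs"
  by (induction qs) (simp_all add: oracle_phase_Cons, simp add: oracle_phase_def)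

lemma oracle_phase_unimodular: "cmod (oracle_phase x qs) = 1"
  by (induction qs) (simp_all add: oracle_phase_Cons norm_mult, simp add: oracle_phase_def)

lemma oracle_bit_flip:
  assumes "length x = n" "i < n"
  shows "oracle_bit (x[i := \<not> x ! i]) q \<longleftrightarrow> (oracle_bit x q \<noteq> (q = Suc i))"
  using assms by (cases q) (auto simp: oracle_bit_def nth_list_update)

lemma oracle_phase_flip:
  assumes "length x = n" "i < n"
  shows "oracle_phase x qs * oracle_phase (x[i := \<not> x ! i]) qs
           = (if flips_sign i qs then -1 else 1)"
proof (induction qs)
  case Nil
  show ?case by (simp add: oracle_phase_def flips_sign_def)
next
  case (Cons q qs)
  have "oracle_phase x (q # qs) * oracle_phase (x[i := \<not> x ! i]) (q # qs)
      = (if q = Suc i then -1 else 1) * (oracle_phase x qs * oracle_phase (x[i := \<not> x ! i]) qs)"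
    using oracle_bit_flip[OF assms, of q] by (simp add: oracle_phase_Cons algebra_simps)
  with Cons show ?case by (simp add: flips_sign_def)
qed

lemma card_flipped_bits_le: "card {i. i < n \<and> flips_sign i qs} \<le> length qs"
proof -
  have "{i. i < n \<and> flips_sign i qs} \<subseteq> (\<lambda>q. q - 1) ` set qs"
  proof
    fix i assume "i \<in> {i. i < n \<and> flips_sign i qs}"
    hence "count_list qs (Suc i) \<noteq> 0" by (metis flips_sign_def mem_Collect_eq even_zero)
    hence "Suc i \<in> set qs" by (simp add: count_list_0_iff)
    thus "i \<in> (\<lambda>q. q - 1) ` set qs" by force
  qed
  hence "card {i. i < n \<and> flips_sign i qs} \<le> card ((\<lambda>q. q - 1) ` set qs)"
    by (intro card_mono) auto
  also have "\<dots> \<le> length qs" using card_image_le card_length le_trans by blast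
  finally show ?thesis .
qed

lemma sqnorm_phased: "sqnorm B (phased x \<psi>) = sqnorm B \<psi>"
  by (simp add: sqnorm_def phased_def norm_mult oracle_phase_unimodular)

lemma braket_phased_flip:
  assumes "length x = n" "i < n"
  shows "braket B (phased x \<psi>) (phased (x[i := \<not> x ! i]) \<psi>)
           = complex_of_real (\<Sum>b\<in>B. (if flips_sign i (fst b) then -1 else 1) * (cmod (\<psi> b))^2)"
  unfolding braket_def of_real_sum
proof (rule sum.cong[OF refl])
  fix b
  have "cnj (phased x \<psi> b) * phased (x[i := \<not> x ! i]) \<psi> b
      = (oracle_phase x (fst b) * oracle_phase (x[i := \<not> x ! i]) (fst b)) * (\<psi> b * cnj (\<psi> b))"
    by (simp add: phased_def oracle_phase_real algebra_simps)
  also have "\<dots> = (if flips_sign i (fst b) then -1 else 1) * complex_of_real ((cmod (\<psi> b))^2)"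
    by (simp only: oracle_phase_flip[OF assms] complex_norm_square)
  finally show "cnj (phased x \<psi> b) * phased (x[i := \<not> x ! i]) \<psi> b
      = complex_of_real ((if flips_sign i (fst b) then -1 else 1) * (cmod (\<psi> b))^2)"
    by simp
qed

lemma flipped_weight_half:
  assumes M: "two_outcome_measurement B M" and unit: "sqnorm B \<psi> = 1"
    and exact: "\<forall>x. length x = n \<longrightarrow> qform B M (phased x \<psi>) = (if f x then 1 else 0)"
    and dep: "depends_on n f i" and i: "i < n"
  shows "(\<Sum>b\<in>B. of_bool (flips_sign i (fst b)) * (cmod (\<psi> b))^2) = 1 / 2"
proof -
  obtain x where x: "length x = n" and differ: "f x \<noteq> f (x[i := \<not> x ! i])"
    using dep unfolding depends_on_def by blast
  define y where "y = x[i := \<not> x ! i]"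
  have y: "length y = n" using x by (simp add: y_def)
  have units: "sqnorm B (phased x \<psi>) = 1" "sqnorm B (phased y \<psi>) = 1"
    using unit by (simp_all add: sqnorm_phased)
  have "braket B (phased x \<psi>) (phased y \<psi>) = 0"
  proof (cases "f x")
    case True
    show ?thesis
      using certain_outcomes_orthogonal[OF M _ _ units] exact x y True differ
      by (simp add: y_def)
  next
    case False
    have "braket B (phased y \<psi>) (phased x \<psi>) = 0"
      using certain_outcomes_orthogonal[OF M _ _ units(2,1)] exact x y False differ
      by (simp add: y_def)
    thus ?thesis by (simp add: braket_swap[of B "phased y \<psi>"])
  qed
  hence "complex_of_real (\<Sum>b\<in>B. (if flips_sign i (fst b) then -1 else 1) * (cmod (\<psi> b))^2) = 0"
    using braket_phased_flip[OF x i, of B \<psi>] unfolding y_def by metis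
  hence signed: "(\<Sum>b\<in>B. (if flips_sign i (fst b) then -1 else 1) * (cmod (\<psi> b))^2) = 0"
    by (simp only: of_real_eq_0_iff)
  have "(\<Sum>b\<in>B. (if flips_sign i (fst b) then -1 else 1) * (cmod (\<psi> b))^2)
      = (\<Sum>b\<in>B. (cmod (\<psi> b))^2 - 2 * (of_bool (flips_sign i (fst b)) * (cmod (\<psi> b))^2))"
    by (rule sum.cong) simp_all
  also have "\<dots> = (\<Sum>b\<in>B. (cmod (\<psi> b))^2)
      - 2 * (\<Sum>b\<in>B. of_bool (flips_sign i (fst b)) * (cmod (\<psi> b))^2)"
    by (simp only: sum_subtractf sum_distrib_left)
  finally show ?thesis using signed unit by (simp add: sqnorm_def)
qed

lemma exact_algorithm_query_bound:
  assumes dep: "\<forall>i<n. depends_on n f i" and alg: "na_exact_algorithm n f k"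
  shows "real n / 2 \<le> real k"
proof -
  obtain d \<psi> M where unit: "sqnorm (query_basis n k d) \<psi> = 1"
    and M: "two_outcome_measurement (query_basis n k d) M"
    and exact: "\<forall>x. length x = n \<longrightarrow>
                  qform (query_basis n k d) M (phased x \<psi>) = (if f x then 1 else 0)"
    using alg unfolding na_exact_algorithm_def phased_def by blast
  define B where "B = query_basis n k d"
  define w where "w b = (cmod (\<psi> b))^2" for b
  have "real n / 2 = (\<Sum>i<n. 1 / 2)" by simp
  also have "\<dots> = (\<Sum>i<n. \<Sum>b\<in>B. of_bool (flips_sign i (fst b)) * w b)"
    using flipped_weight_half[OF M unit exact] dep by (intro sum.cong) (simp_all add: B_def w_def)
  also have "\<dots> = (\<Sum>b\<in>B. w b * card {i. i < n \<and> flips_sign i (fst b)})"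
    by (subst sum.swap) (simp add: sum_distrib_left[symmetric] mult.commute lessThan_def Collect_conj_eq)
  also have "\<dots> \<le> (\<Sum>b\<in>B. w b * k)"
  proof (rule sum_mono)
    fix b assume "b \<in> B"
    hence "card {i. i < n \<and> flips_sign i (fst b)} \<le> k"
      using card_flipped_bits_le[of n "fst b"] by (auto simp: B_def query_basis_def)
    thus "w b * card {i. i < n \<and> flips_sign i (fst b)} \<le> w b * k"
      by (simp add: w_def mult_left_mono)
  qed
  also have "\<dots> = real k"
    using unit by (simp add: B_def w_def sqnorm_def sum_distrib_right[symmetric])
  finally show ?thesis .
qed

theorem corollary7p5:
  fixes f :: "bool list \<Rightarrow> bool" and n :: nat
  assumes "\<forall>i<n. depends_on n f i"
  shows "enat (nat \<lceil>real n / 2\<rceil>) \<le> Q_E_na n f"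
  unfolding Q_E_na_def
proof (rule INF_greatest)
  fix k assume "k \<in> {k. na_exact_algorithm n f k}"
  hence "real n / 2 \<le> real k" using exact_algorithm_query_bound assms by blast
  hence "nat \<lceil>real n / 2\<rceil> \<le> k" by linarith
  thus "enat (nat \<lceil>real n / 2\<rceil>) \<le> enat k" by simp
qed

end
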